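(* Let $\mathbf{x}$ be a feasible solution of $\textsc{Node-MC-Rel}$. Choose $\ell$ uniformly at random from $\{1,\dots,k\}$ and, independently, $\theta$ uniformly at random from $(0,1/2)$, and let $C=C(\ell,\theta)=\bigcup_{i\neq\ell}B^+(s_i,\theta)$. Then for every $v\in V$, $\Pr[v\in C]\le 2(1-1/k)\,x_v$.
   Context: $G=(V,E)$ is an undirected graph with non-negative node weights $w_v$ and terminal set $S=\{s_1,\dots,s_k\}$, $k\ge2$, forming an independent set. For $i<j$, $\mathcal{P}_{ij}$ is the set of paths between $s_i$ and $s_j$. $\textsc{Node-MC-Rel}$: minimize $\sum_{v\in V\setminus S}w_vx_v$ s.t. $\sum_{v\in p}x_v\ge1$ for all $p\in\mathcal{P}_{ij}$, $i<j$ (sum over all vertices of $p$ including endpoints), $x_v=0$ for $v\in S$, $x\ge0$. $d(a,b)$ is the minimum over paths from $a$ to $b$ of the sum of $x$ over all vertices of the path including both endpoints. $B(u,r)=\{v:d(u,v)\le r\}$; $B^+(u,r)$ is the set of nodes not in $B(u,r)$ adjacent to some node of $B(u,r)$. *)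

theory Defs
  imports "HOL-Probability.Probability"
begin

text \<open>Undirected graph on a finite vertex set V with symmetric, irreflexive edge relation E.\<close>

definition is_path :: "'a set \<Rightarrow> ('a \<Rightarrow> 'a \<Rightarrow> bool) \<Rightarrow> 'a list \<Rightarrow> 'a \<Rightarrow> 'a \<Rightarrow> bool" where
  "is_path V E p a b \<longleftrightarrow> p \<noteq> [] \<and> hd p = a \<and> last p = b \<and> set p \<subseteq> V \<and> distinct p \<and>
     (\<forall>i. Suc i < length p \<longrightarrow> E (p ! i) (p ! Suc i))"

definition path_len :: "('a \<Rightarrow> real) \<Rightarrow> 'a list \<Rightarrow> real" where
  "path_len x p = sum_list (map x p)"

text \<open>d(a,b): minimum over paths (infinite if no path exists).\<close>
definition node_dist :: "'a set \<Rightarrow> ('a \<Rightarrow> 'a \<Rightarrow> bool) \<Rightarrow> ('a \<Rightarrow> real) \<Rightarrow> 'a \<Rightarrow> 'a \<Rightarrow> ereal" where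
  "node_dist V E x a b = Inf {ereal (path_len x p) | p. is_path V E p a b}"

definition ball_nd :: "'a set \<Rightarrow> ('a \<Rightarrow> 'a \<Rightarrow> bool) \<Rightarrow> ('a \<Rightarrow> real) \<Rightarrow> 'a \<Rightarrow> real \<Rightarrow> 'a set" where
  "ball_nd V E x u r = {v \<in> V. node_dist V E x u v \<le> ereal r}"

definition ball_bdry :: "'a set \<Rightarrow> ('a \<Rightarrow> 'a \<Rightarrow> bool) \<Rightarrow> ('a \<Rightarrow> real) \<Rightarrow> 'a \<Rightarrow> real \<Rightarrow> 'a set" where
  "ball_bdry V E x u r = {w \<in> V. w \<notin> ball_nd V E x u r \<and> (\<exists>v \<in> ball_nd V E x u r. E v w)}"

definition node_mc_feasible :: "'a set \<Rightarrow> ('a \<Rightarrow> 'a \<Rightarrow> bool) \<Rightarrow> nat \<Rightarrow> (nat \<Rightarrow> 'a) \<Rightarrow> ('a \<Rightarrow> real) \<Rightarrow> bool" where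
  "node_mc_feasible V E k s x \<longleftrightarrow>
     (\<forall>i\<in>{1..k}. \<forall>j\<in>{1..k}. i < j \<longrightarrow> (\<forall>p. is_path V E p (s i) (s j) \<longrightarrow> path_len x p \<ge> 1)) \<and>
     (\<forall>i\<in>{1..k}. x (s i) = 0) \<and>
     (\<forall>v\<in>V. x v \<ge> 0)"

definition cut_set :: "'a set \<Rightarrow> ('a \<Rightarrow> 'a \<Rightarrow> bool) \<Rightarrow> nat \<Rightarrow> (nat \<Rightarrow> 'a) \<Rightarrow> ('a \<Rightarrow> real) \<Rightarrow> nat \<Rightarrow> real \<Rightarrow> 'a set" where
  "cut_set V E k s x l \<theta> = (\<Union>i\<in>{1..k} - {l}. ball_bdry V E x (s i) \<theta>)"

end

theory Submission
  imports Defs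
begin

text \<open>
  Whether \<open>v \<in> C(l, \<theta>)\<close> depends only on the sets \<open>U\<^sub>i = {\<theta>. v \<in> B\<^sup>+(s\<^sub>i, \<theta>)}\<close>: it holds iff
  \<open>\<theta> \<in> U\<^sub>i\<close> for some \<open>i \<noteq> l\<close>. Every radius in \<open>U\<^sub>i\<close> lies in \<open>[d(s\<^sub>i,v) - x\<^sub>v, d(s\<^sub>i,v))\<close>, an interval of
  length \<open>x\<^sub>v\<close>; and for \<open>i \<noteq> j\<close>, radii \<open>\<theta> \<in> U\<^sub>i\<close>, \<open>\<theta>' \<in> U\<^sub>j\<close> satisfy \<open>\<theta> + \<theta>' + x\<^sub>v \<ge> 1\<close>, because
  they yield an \<open>s\<^sub>i\<close>-\<open>s\<^sub>j\<close> path through \<open>v\<close> of at most that length. Let \<open>U\<^sub>f\<close> be the set reaching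
  lowest into \<open>(0,1/2)\<close>, down to \<open>a\<close>. Then every other \<open>U\<^sub>j\<close> meets \<open>(0,1/2)\<close> only above \<open>1 - x\<^sub>v - a\<close>,
  so for \<open>l \<noteq> f\<close> the bad radii lie in an interval of length \<open>min(x\<^sub>v, 1/2 - a)\<close> and for \<open>l = f\<close>
  in one of length \<open>max(0, x\<^sub>v + a - 1/2)\<close>. Summing over \<open>l\<close> gives at most \<open>(k - 1) x\<^sub>v\<close>, and
  averaging with density \<open>2/k\<close> gives the bound.
\<close>

lemma is_path_iff_successively:
  "is_path V E p a b \<longleftrightarrow>
     p \<noteq> [] \<and> hd p = a \<and> last p = b \<and> set p \<subseteq> V \<and> distinct p \<and> successively E p"
  unfolding is_path_def successively_conv_nth by blast

lemma finite_is_path: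
  assumes "finite V"
  shows "finite {p. is_path V E p a b}"
proof (rule finite_subset)
  show "{p. is_path V E p a b} \<subseteq> {p. set p \<subseteq> V \<and> length p \<le> card V}"
  proof
    fix p assume "p \<in> {p. is_path V E p a b}"
    then have p: "set p \<subseteq> V" "distinct p" unfolding is_path_def by auto
    then have "length p \<le> card V"
      using card_mono[OF assms p(1)] distinct_card[OF p(2)] by simp
    with p show "p \<in> {p. set p \<subseteq> V \<and> length p \<le> card V}" by simp
  qed
  show "finite {p. set p \<subseteq> V \<and> length p \<le> card V}"
    using finite_lists_length_le[OF assms] .
qed

lemma node_dist_le_path_len:
  "is_path V E p a b \<Longrightarrow> node_dist V E x a b \<le> ereal (path_len x p)"
  unfolding node_dist_def by (rule Inf_lower) auto

lemma node_dist_le_obtains_path: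
  assumes "finite V" "node_dist V E x a b \<le> ereal t"
  obtains p where "is_path V E p a b" "path_len x p \<le> t"
proof -
  define L where "L = (\<lambda>p. ereal (path_len x p)) ` {p. is_path V E p a b}"
  have dist_eq: "node_dist V E x a b = Inf L"
    unfolding node_dist_def L_def by (simp add: image_Collect)
  have "L \<noteq> {}"
    using assms(2) unfolding dist_eq by (auto simp: top_ereal_def)
  moreover have "finite L"
    unfolding L_def using finite_is_path[OF assms(1)] by simp
  ultimately have "Inf L \<in> L"
    using Min_in Min_Inf by metis
  then obtain p where "is_path V E p a b" "ereal (path_len x p) = Inf L"
    unfolding L_def by auto
  with assms(2) that show ?thesis
    unfolding dist_eq by (metis ereal_less_eq(3))
qed

lemma walk_obtains_path:
  assumes "p \<noteq> []" "set p \<subseteq> V" "successively E p" "\<And>u. u \<in> V \<Longrightarrow> x u \<ge> 0"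
  obtains q where "is_path V E q (hd p) (last p)" "path_len x q \<le> path_len x p"
  using assms(1-3)
proof (induction "length p" arbitrary: p rule: less_induct)
  case less
  show ?case
  proof (cases "distinct p")
    case True
    then show ?thesis using less.prems unfolding is_path_iff_successively by auto
  next
    case False
    then obtain xs y ys zs where p: "p = xs @ [y] @ ys @ [y] @ zs"
      using not_distinct_decomp by blast
    define q where "q = xs @ [y] @ zs"
    have q_walk: "q \<noteq> []" "set q \<subseteq> V" "successively E q"
      using less.prems(3,4) unfolding p q_def
      by (auto simp: successively_append_iff successively_Cons)
    have q_ends: "hd q = hd p" "last q = last p"
      unfolding p q_def by (cases xs; simp)+
    have q_shorter: "length q < length p"
      unfolding p q_def by simp
    have q_len: "path_len x q \<le> path_len x p"
    proof -
      have "\<forall>u\<in>set p. 0 \<le> x u"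
        using less.prems(3) assms(4) by auto
      then have "0 \<le> x y" "0 \<le> sum_list (map x ys)"
        unfolding p by (auto intro!: sum_list_nonneg)
      then show ?thesis unfolding p q_def path_len_def by simp
    qed
    show ?thesis
    proof (rule less.hyps[OF q_shorter _ q_walk])
      fix r assume "is_path V E r (hd q) (last q)" "path_len x r \<le> path_len x q"
      with q_ends q_len show thesis
        using less.prems(1) by (metis order_trans)
    qed
  qed
qed

lemma path_extend_obtains_path:
  assumes "is_path V E p a u" "E u v" "v \<in> V" "\<And>u. u \<in> V \<Longrightarrow> x u \<ge> 0"
  obtains r where "is_path V E r a v" "path_len x r \<le> path_len x p + x v"
proof -
  have p: "p \<noteq> []" "hd p = a" "last p = u" "set p \<subseteq> V" "successively E p"
    using assms(1) unfolding is_path_iff_successively by auto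
  have walk: "successively E (p @ [v])"
    using p assms(2) by (auto simp: successively_append_iff)
  obtain r
    where "is_path V E r (hd (p @ [v])) (last (p @ [v]))" "path_len x r \<le> path_len x (p @ [v])"
    by (rule walk_obtains_path[of "p @ [v]" V E x]) (use walk p assms(3,4) in auto)
  with p that show ?thesis by (auto simp: path_len_def)
qed

lemma paths_join_obtains_path:
  assumes "\<And>a b. E a b \<Longrightarrow> E b a" "\<And>u. u \<in> V \<Longrightarrow> x u \<ge> 0" "v \<in> V"
    and "is_path V E p a u" "E u v" and "is_path V E q b u'" "E u' v"
  obtains r where "is_path V E r a b" "path_len x r \<le> path_len x p + x v + path_len x q"
proof -
  have p: "p \<noteq> []" "hd p = a" "last p = u" "set p \<subseteq> V" "successively E p"
    using assms(4) unfolding is_path_iff_successively by auto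
  have q: "q \<noteq> []" "hd q = b" "last q = u'" "set q \<subseteq> V" "successively E q"
    using assms(6) unfolding is_path_iff_successively by auto
  have "successively E (rev q)"
    unfolding successively_rev by (rule successively_mono[OF q(5)]) (use assms(1) in auto)
  then have "successively E ([v] @ rev q)"
    using q assms(1,7) by (subst successively_append_iff) (auto simp: hd_rev)
  then have walk: "successively E (p @ [v] @ rev q)"
    using p assms(5) by (subst successively_append_iff) auto
  obtain r where
    "is_path V E r (hd (p @ [v] @ rev q)) (last (p @ [v] @ rev q))"
    "path_len x r \<le> path_len x (p @ [v] @ rev q)"
    by (rule walk_obtains_path[of "p @ [v] @ rev q" V E x]) (use walk p q assms(2,3) in auto)
  with p q that show ?thesis
    by (auto simp: last_rev path_len_def rev_map[symmetric])
qed

lemma ball_bdry_obtains_path: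
  assumes "finite V" "v \<in> ball_bdry V E x a t"
  obtains p u where "is_path V E p a u" "path_len x p \<le> t" "E u v"
proof -
  obtain u where "node_dist V E x a u \<le> ereal t" "E u v"
    using assms(2) unfolding ball_bdry_def ball_nd_def by auto
  with assms(1) that show ?thesis
    by (metis node_dist_le_obtains_path)
qed

lemma ball_bdry_radius_lt:
  assumes "finite V" "\<And>u. u \<in> V \<Longrightarrow> x u \<ge> 0"
    and "v \<in> ball_bdry V E x a t" "v \<in> ball_bdry V E x a t'"
  shows "t' < t + x v"
proof -
  obtain p u where p: "is_path V E p a u" "path_len x p \<le> t" "E u v"
    using ball_bdry_obtains_path[OF assms(1,3)] .
  have v: "v \<in> V" "\<not> node_dist V E x a v \<le> ereal t'"
    using assms(4) unfolding ball_bdry_def ball_nd_def by auto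
  obtain r where r: "is_path V E r a v" "path_len x r \<le> path_len x p + x v"
    using path_extend_obtains_path[OF p(1,3) v(1) assms(2)] .
  have "t' < path_len x r"
    using v(2) node_dist_le_path_len[OF r(1), of x] by (metis ereal_less_eq(3) linorder_not_le order_trans)
  with r(2) p(2) show ?thesis by linarith
qed

lemma ball_bdry_radius_sum_ge:
  assumes "finite V" "\<And>a b. E a b \<Longrightarrow> E b a" "\<And>u. u \<in> V \<Longrightarrow> x u \<ge> 0"
    and "\<And>p. is_path V E p a b \<Longrightarrow> c \<le> path_len x p"
    and "v \<in> ball_bdry V E x a t" "v \<in> ball_bdry V E x b t'"
  shows "c \<le> t + t' + x v"
proof -
  obtain p u where p: "is_path V E p a u" "path_len x p \<le> t" "E u v"
    using ball_bdry_obtains_path[OF assms(1,5)] .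
  obtain q u' where q: "is_path V E q b u'" "path_len x q \<le> t'" "E u' v"
    using ball_bdry_obtains_path[OF assms(1,6)] .
  have "v \<in> V"
    using assms(5) unfolding ball_bdry_def by simp
  then obtain r where r: "is_path V E r a b" "path_len x r \<le> path_len x p + x v + path_len x q"
    using paths_join_obtains_path[of E V x v p a u q b u'] assms(2,3) p(1,3) q(1,3) by blast
  with assms(4) p(2) q(2) show ?thesis by fastforce
qed

lemma borel_ball_bdry_radii:
  assumes "finite V"
  shows "{t. v \<in> ball_bdry V E x a t} \<in> sets borel"
proof -
  have closed_radii: "{t::real. c \<le> ereal t} \<in> sets borel" for c
    by (intro borel_closed closed_Collect_le continuous_intros)
  have "{t. v \<in> ball_bdry V E x a t} =
        (if v \<in> V then - {t. node_dist V E x a v \<le> ereal t} \<inter>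
           (\<Union>u\<in>{u\<in>V. E u v}. {t. node_dist V E x a u \<le> ereal t}) else {})"
    unfolding ball_bdry_def ball_nd_def by auto
  moreover have "finite {u\<in>V. E u v}"
    using assms by simp
  ultimately show ?thesis
    using closed_radii by auto
qed

lemma measure_le_Icc_length:
  fixes p q :: real
  assumes "A \<subseteq> {p..q}" "A \<in> sets borel"
  shows "measure lborel A \<le> max 0 (q - p)"
proof (cases "p \<le> q")
  case True
  have "measure lborel A \<le> measure lborel {p..q}"
    using assms by (intro measure_mono_fmeasurable) (auto simp: fmeasurable_def emeasure_lborel_Icc_eq)
  with True show ?thesis by simp
next
  case False
  with assms show ?thesis by auto
qed

lemma max_excess_plus_min_le:
  fixes n x a :: real
  assumes "n \<ge> 2"
  shows "max 0 (x + a - 1/2) + (n - 1) * min x (1/2 - a) \<le> (n - 1) * x"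
proof (cases "x \<le> 1/2 - a")
  case False
  have "max 0 (x + a - 1/2) + (n - 1) * min x (1/2 - a) = x + (n - 2) * (1/2 - a)"
    using False by (simp add: field_simps)
  also have "\<dots> \<le> x + (n - 2) * x"
    using False assms by (intro add_left_mono mult_left_mono) auto
  finally show ?thesis
    by (simp add: algebra_simps)
qed simp

lemma sum_measure_union_others_le:
  fixes U :: "'i \<Rightarrow> real set" and x :: real
  assumes "finite I" "card I \<ge> 2" "\<And>i. U i \<in> sets borel" "x \<ge> 0"
    and diam: "\<And>i t t'. i \<in> I \<Longrightarrow> t \<in> U i \<Longrightarrow> t' \<in> U i \<Longrightarrow> t' < t + x"
    and sep: "\<And>i j t t'. i \<in> I \<Longrightarrow> j \<in> I \<Longrightarrow> i \<noteq> j \<Longrightarrow> t \<in> U i \<Longrightarrow> t' \<in> U j \<Longrightarrow> 1 \<le> t + t' + x"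
  shows "(\<Sum>l\<in>I. measure lborel ({0<..<1/2} \<inter> (\<Union>i\<in>I-{l}. U i))) \<le> (real (card I) - 1) * x"
proof -
  define T where "T i = U i \<inter> {0<..<1/2}" for i
  define A where "A l = {0<..<1/2} \<inter> (\<Union>i\<in>I-{l}. U i)" for l
  have A_borel: "A l \<in> sets borel" for l
    unfolding A_def using assms(1,3) by (intro sets.Int sets.finite_UN) auto
  define N where "N = {i\<in>I. T i \<noteq> {}}"
  show ?thesis
  proof (cases "N = {}")
    case True
    then have "A l = {}" for l
      unfolding A_def N_def T_def by blast
    with assms(2,4) show ?thesis
      unfolding A_def[symmetric] by simp
  next
    case False
    have "finite N"
      unfolding N_def using assms(1) by simp
    define f where "f = arg_min_on (\<lambda>i. Inf (T i)) N"
    define a where "a = Inf (T f)"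
    have fI: "f \<in> I" and Tf: "T f \<noteq> {}"
      using arg_min_if_finite(1)[OF \<open>finite N\<close> False] unfolding f_def N_def by auto
    have a_le: "a \<le> t" if "i \<in> I" "t \<in> T i" for i t
    proof -
      have "a \<le> Inf (T i)"
        unfolding a_def f_def using \<open>finite N\<close> that by (intro arg_min_least) (auto simp: N_def)
      also have "Inf (T i) \<le> t"
        using that(2) by (intro cInf_lower bdd_belowI[of _ 0]) (auto simp: T_def)
      finally show ?thesis .
    qed
    have diam_f: "t \<le> a + x" if "t \<in> T f" for t
    proof -
      have "t - x \<le> a"
        unfolding a_def using diam[OF fI] that T_def by (intro cInf_greatest[OF Tf]) force
      then show ?thesis by simp
    qed
    have sep_f: "1 - x - t \<le> a" if "j \<in> I" "j \<noteq> f" "t \<in> T j" for j t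
      unfolding a_def using sep[OF fI that(1)] that T_def by (intro cInf_greatest[OF Tf]) force
    have a_lt: "a < 1/2"
      using Tf a_le[OF fI] unfolding T_def by force
    have "A l \<subseteq> {a..a + min x (1/2 - a)}" if "l \<noteq> f" for l
    proof
      fix t assume "t \<in> A l"
      then obtain i where i: "i \<in> I" "i \<noteq> l" "t \<in> T i"
        unfolding A_def T_def by blast
      then show "t \<in> {a..a + min x (1/2 - a)}"
        using a_le[OF i(1,3)] diam_f[of t] sep_f[of i t] unfolding T_def
        by (cases "i = f") auto
    qed
    then have A_other: "measure lborel (A l) \<le> min x (1/2 - a)" if "l \<noteq> f" for l
      using measure_le_Icc_length[OF _ A_borel, of l a "a + min x (1/2 - a)"] that a_lt assms(4)
      by simp
    have "A f \<subseteq> {1 - x - a..1/2}"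
      using sep_f unfolding A_def T_def by fastforce
    then have A_f: "measure lborel (A f) \<le> max 0 (x + a - 1/2)"
      using measure_le_Icc_length[OF _ A_borel, of f "1 - x - a" "1/2"] by (simp add: algebra_simps)
    have "(\<Sum>l\<in>I. measure lborel (A l)) = measure lborel (A f) + (\<Sum>l\<in>I-{f}. measure lborel (A l))"
      using assms(1) fI by (simp add: sum.remove)
    also have "\<dots> \<le> max 0 (x + a - 1/2) + (\<Sum>l\<in>I-{f}. min x (1/2 - a))"
      using A_f A_other by (intro add_mono sum_mono) auto
    also have "\<dots> = max 0 (x + a - 1/2) + (real (card I) - 1) * min x (1/2 - a)"
      using assms(1,2) fI by (simp add: of_nat_diff)
    also have "\<dots> \<le> (real (card I) - 1) * x"
      using assms(2) by (intro max_excess_plus_min_le) simp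
    finally show ?thesis
      unfolding A_def .
  qed
qed

lemma measure_pmf_of_set_pair_uniform:
  fixes S :: "('b \<times> real) set"
  assumes "finite I" "I \<noteq> {}" "a < b"
    and S: "S \<in> sets (measure_pmf (pmf_of_set I) \<Otimes>\<^sub>M uniform_measure lborel {a<..<b})"
  shows "measure (measure_pmf (pmf_of_set I) \<Otimes>\<^sub>M uniform_measure lborel {a<..<b}) S
         = (\<Sum>l\<in>I. measure lborel ({a<..<b} \<inter> Pair l -` S)) / (real (card I) * (b - a))"
proof -
  define M where "M = uniform_measure lborel {a<..<b}"
  interpret M: prob_space M
    unfolding M_def using assms(3) by (intro prob_space_uniform_measure) auto
  define m where "m l = measure lborel ({a<..<b} \<inter> Pair l -` S) / (b - a)" for l
  have m_nonneg: "0 \<le> m l" for l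
    unfolding m_def using assms(3) by simp
  have slice: "emeasure M (Pair l -` S) = ennreal (m l)" for l
  proof -
    have "Pair l -` S \<in> sets M"
      using sets_Pair1[OF S[folded M_def]] .
    then have "measure M (Pair l -` S) = m l"
      unfolding M_def m_def using assms(3) by (subst measure_uniform_measure) auto
    then show ?thesis
      by (simp add: M.emeasure_eq_measure)
  qed
  have "emeasure (measure_pmf (pmf_of_set I) \<Otimes>\<^sub>M M) S
        = (\<integral>\<^sup>+l. emeasure M (Pair l -` S) \<partial>measure_pmf (pmf_of_set I))"
    using M.emeasure_pair_measure_alt S[folded M_def] .
  also have "\<dots> = (\<Sum>l\<in>I. ennreal (m l)) / card I"
    unfolding slice using assms(1,2) by (simp add: nn_integral_pmf_of_set)
  also have "\<dots> = ennreal ((\<Sum>l\<in>I. m l) / card I)"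
    using assms(1,2) m_nonneg
    by (simp add: sum_ennreal ennreal_of_nat_eq_real_of_nat divide_ennreal sum_nonneg card_gt_0_iff)
  finally have "measure (measure_pmf (pmf_of_set I) \<Otimes>\<^sub>M M) S = (\<Sum>l\<in>I. m l) / card I"
    unfolding measure_def using m_nonneg by (simp add: sum_nonneg)
  then show ?thesis
    unfolding M_def m_def by (simp add: sum_divide_distrib mult.commute)
qed

lemma measure_random_cut_le:
  fixes U :: "nat \<Rightarrow> real set" and k :: nat and x :: real
  assumes "k \<ge> 2" "\<And>i. U i \<in> sets borel" "x \<ge> 0"
    and "\<And>i t t'. i \<in> {1..k} \<Longrightarrow> t \<in> U i \<Longrightarrow> t' \<in> U i \<Longrightarrow> t' < t + x"
    and "\<And>i j t t'. i \<in> {1..k} \<Longrightarrow> j \<in> {1..k} \<Longrightarrow> i \<noteq> j \<Longrightarrow> t \<in> U i \<Longrightarrow> t' \<in> U j \<Longrightarrow> 1 \<le> t + t' + x"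
  shows "measure (measure_pmf (pmf_of_set {1..k}) \<Otimes>\<^sub>M uniform_measure lborel {0<..<1/2})
           {(l, t). \<exists>i\<in>{1..k}-{l}. t \<in> U i} \<le> 2 * (1 - 1 / real k) * x"
proof -
  let ?S = "{(l, t). \<exists>i\<in>{1..k}-{l}. t \<in> U i}"
  have "?S = (\<Union>i\<in>{1..k}. (UNIV - {i}) \<times> U i)"
    by auto
  then have S: "?S \<in> sets (measure_pmf (pmf_of_set {1..k}) \<Otimes>\<^sub>M uniform_measure lborel {0<..<1/2})"
    using assms(2) by (auto intro!: pair_measureI)
  have slices: "Pair l -` ?S = (\<Union>i\<in>{1..k}-{l}. U i)" for l
    by auto
  have "measure (measure_pmf (pmf_of_set {1..k}) \<Otimes>\<^sub>M uniform_measure lborel {0<..<1/2}) ?S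
        = (\<Sum>l\<in>{1..k}. measure lborel ({0<..<1/2} \<inter> (\<Union>i\<in>{1..k}-{l}. U i))) / (real k / 2)"
    using measure_pmf_of_set_pair_uniform[OF _ _ _ S] assms(1) unfolding slices by simp
  also have "\<dots> \<le> (real k - 1) * x / (real k / 2)"
    using sum_measure_union_others_le[of "{1..k}" U x] assms by (intro divide_right_mono) auto
  also have "\<dots> = 2 * (1 - 1 / real k) * x"
    using assms(1) by (simp add: field_simps)
  finally show ?thesis .
qed

theorem mainTheorem10:
  fixes V :: "'a set" and E :: "'a \<Rightarrow> 'a \<Rightarrow> bool" and k :: nat and s :: "nat \<Rightarrow> 'a"
    and w x :: "'a \<Rightarrow> real" and v :: 'a
  assumes "finite V"
    and "\<And>a b. E a b \<Longrightarrow> a \<in> V \<and> b \<in> V"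
    and "\<And>a b. E a b \<Longrightarrow> E b a"
    and "\<And>a. \<not> E a a"
    and "\<And>a. a \<in> V \<Longrightarrow> w a \<ge> 0"
    and "k \<ge> 2"
    and "s ` {1..k} \<subseteq> V"
    and "inj_on s {1..k}"
    and "\<And>i j. i \<in> {1..k} \<Longrightarrow> j \<in> {1..k} \<Longrightarrow> \<not> E (s i) (s j)"
    and "node_mc_feasible V E k s x"
    and "v \<in> V"
  shows "measure (measure_pmf (pmf_of_set {1..k}) \<Otimes>\<^sub>M uniform_measure lborel {0<..<1/2})
           {(l, \<theta>). v \<in> cut_set V E k s x l \<theta>}
         \<le> 2 * (1 - 1 / real k) * x v"
proof -
  have x_nonneg: "\<And>u. u \<in> V \<Longrightarrow> 0 \<le> x u"
    using assms(10) unfolding node_mc_feasible_def by auto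
  define U where "U i = {\<theta>. v \<in> ball_bdry V E x (s i) \<theta>}" for i
  have event: "{(l, \<theta>). v \<in> cut_set V E k s x l \<theta>} = {(l, \<theta>). \<exists>i\<in>{1..k}-{l}. \<theta> \<in> U i}"
    unfolding cut_set_def U_def by auto
  have separated_ordered: "1 \<le> t + t' + x v"
    if "i \<in> {1..k}" "j \<in> {1..k}" "i < j" "t \<in> U i" "t' \<in> U j" for i j t t'
  proof (rule ball_bdry_radius_sum_ge[OF assms(1,3) x_nonneg])
    show "1 \<le> path_len x p" if "is_path V E p (s i) (s j)" for p
      using assms(10) \<open>i \<in> {1..k}\<close> \<open>j \<in> {1..k}\<close> \<open>i < j\<close> that
      unfolding node_mc_feasible_def by blast
  qed (use that(4,5) in \<open>simp_all add: U_def\<close>)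
  have separated: "1 \<le> t + t' + x v"
    if "i \<in> {1..k}" "j \<in> {1..k}" "i \<noteq> j" "t \<in> U i" "t' \<in> U j" for i j t t'
  proof (cases "i < j")
    case True
    then show ?thesis using separated_ordered that by blast
  next
    case False
    then have "1 \<le> t' + t + x v"
      using separated_ordered[of j i t' t] that by simp
    then show ?thesis by linarith
  qed
  show ?thesis
    unfolding event
  proof (rule measure_random_cut_le[OF assms(6)])
    show "U i \<in> sets borel" for i
      unfolding U_def using assms(1) by (rule borel_ball_bdry_radii)
    show "t' < t + x v" if "t \<in> U i" "t' \<in> U i" for i t t'
      by (rule ball_bdry_radius_lt[OF assms(1) x_nonneg]) (use that in \<open>simp_all add: U_def\<close>)
  qed (use assms(11) x_nonneg separated in auto)
qed

end
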